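(* Let $T:\mathcal{A}\to\mathcal{A}$ be a Markov operator on a von Neumann algebra $\mathcal{A}\subseteq\mathcal{B}(\mathcal{H})$ and $a\in\mathcal{A}_+$ with $T(a)\le a$. Then the support projection $p=\operatorname{supp}a$ satisfies $T(p)\le p$.
   Context: A Markov operator is a normal completely positive unital linear map on $\mathcal{A}$ ($\mathbbm{1}\in\mathcal{A}$). For self-adjoint $a\in\mathcal{A}$, $\operatorname{supp}a$ is the smallest projection $q\in\mathcal{A}$ with $a=qaq$. *)

theory Defs
  imports "HOL-Analysis.Analysis"
begin

typedef 'i ell2 = "{f :: 'i \<Rightarrow> complex. (\<lambda>i. (cmod (f i))^2) summable_on UNIV}"
  morphisms ell2_vec Ell2
  by (rule exI[of _ "\<lambda>_. 0"]) simp

definition ell2_add :: "'i ell2 \<Rightarrow> 'i ell2 \<Rightarrow> 'i ell2" where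
  "ell2_add x y = Ell2 (\<lambda>i. ell2_vec x i + ell2_vec y i)"

definition ell2_scale :: "complex \<Rightarrow> 'i ell2 \<Rightarrow> 'i ell2" where
  "ell2_scale c x = Ell2 (\<lambda>i. c * ell2_vec x i)"

definition ell2_zero :: "'i ell2" where
  "ell2_zero = Ell2 (\<lambda>_. 0)"

definition ell2_inner :: "'i ell2 \<Rightarrow> 'i ell2 \<Rightarrow> complex" where
  "ell2_inner x y = (\<Sum>\<^sub>\<infinity>i. cnj (ell2_vec x i) * ell2_vec y i)"

definition ell2_norm :: "'i ell2 \<Rightarrow> real" where
  "ell2_norm x = sqrt (Re (ell2_inner x x))"

type_synonym 'i op = "'i ell2 \<Rightarrow> 'i ell2"

definition bounded_op :: "'i op \<Rightarrow> bool" where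
  "bounded_op X \<longleftrightarrow>
     (\<forall>x y. X (ell2_add x y) = ell2_add (X x) (X y)) \<and>
     (\<forall>c x. X (ell2_scale c x) = ell2_scale c (X x)) \<and>
     (\<exists>K. \<forall>x. ell2_norm (X x) \<le> K * ell2_norm x)"

definition BH :: "'i op set" where
  "BH = {X. bounded_op X}"

definition op_add :: "'i op \<Rightarrow> 'i op \<Rightarrow> 'i op" where
  "op_add X Y = (\<lambda>x. ell2_add (X x) (Y x))"

definition op_scale :: "complex \<Rightarrow> 'i op \<Rightarrow> 'i op" where
  "op_scale c X = (\<lambda>x. ell2_scale c (X x))"

definition op_minus :: "'i op \<Rightarrow> 'i op \<Rightarrow> 'i op" where
  "op_minus X Y = op_add X (op_scale (-1) Y)"

definition adj :: "'i op \<Rightarrow> 'i op" where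
  "adj X = (SOME Y. Y \<in> BH \<and> (\<forall>x y. ell2_inner (X x) y = ell2_inner x (Y y)))"

definition cnonneg :: "complex \<Rightarrow> bool" where
  "cnonneg c \<longleftrightarrow> Im c = 0 \<and> 0 \<le> Re c"

definition op_pos :: "'i op \<Rightarrow> bool" where
  "op_pos X \<longleftrightarrow> (\<forall>x. cnonneg (ell2_inner x (X x)))"

definition op_le :: "'i op \<Rightarrow> 'i op \<Rightarrow> bool" where
  "op_le X Y \<longleftrightarrow> op_pos (op_minus Y X)"

definition commutant :: "'i op set \<Rightarrow> 'i op set" where
  "commutant S = {Y \<in> BH. \<forall>X\<in>S. X \<circ> Y = Y \<circ> X}"

definition von_neumann_algebra :: "'i op set \<Rightarrow> bool" where
  "von_neumann_algebra A \<longleftrightarrow>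
     A \<subseteq> BH \<and> id \<in> A \<and>
     (\<forall>X\<in>A. \<forall>Y\<in>A. op_add X Y \<in> A \<and> X \<circ> Y \<in> A) \<and>
     (\<forall>c. \<forall>X\<in>A. op_scale c X \<in> A) \<and>
     (\<forall>X\<in>A. adj X \<in> A) \<and>
     commutant (commutant A) = A"

definition is_projection :: "'i op \<Rightarrow> bool" where
  "is_projection P \<longleftrightarrow> P \<in> BH \<and> P \<circ> P = P \<and> adj P = P"

definition is_support :: "'i op set \<Rightarrow> 'i op \<Rightarrow> 'i op \<Rightarrow> bool" where
  "is_support A a p \<longleftrightarrow>
     p \<in> A \<and> is_projection p \<and> a = p \<circ> a \<circ> p \<and>
     (\<forall>q\<in>A. is_projection q \<and> a = q \<circ> a \<circ> q \<longrightarrow> op_le p q)"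

text \<open>Positivity of an n x n operator matrix acting on H^n.\<close>
definition matrix_pos :: "nat \<Rightarrow> (nat \<Rightarrow> nat \<Rightarrow> 'i op) \<Rightarrow> bool" where
  "matrix_pos n M \<longleftrightarrow>
     (\<forall>\<xi> :: nat \<Rightarrow> 'i ell2. cnonneg (\<Sum>i<n. \<Sum>j<n. ell2_inner (\<xi> i) (M i j (\<xi> j))))"

definition completely_positive :: "'i op set \<Rightarrow> ('i op \<Rightarrow> 'i op) \<Rightarrow> bool" where
  "completely_positive A T \<longleftrightarrow>
     (\<forall>n M. (\<forall>i<n. \<forall>j<n. M i j \<in> A) \<and> matrix_pos n M \<longrightarrow> matrix_pos n (\<lambda>i j. T (M i j)))"

definition op_is_lub :: "'i op set \<Rightarrow> 'i op \<Rightarrow> bool" where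
  "op_is_lub S s \<longleftrightarrow> s \<in> BH \<and> (\<forall>x\<in>S. op_le x s) \<and>
     (\<forall>b\<in>BH. (\<forall>x\<in>S. op_le x b) \<longrightarrow> op_le s b)"

text \<open>Normal: preserves suprema of bounded increasing nets (directed sets) of positive elements.\<close>
definition normal_map :: "'i op set \<Rightarrow> ('i op \<Rightarrow> 'i op) \<Rightarrow> bool" where
  "normal_map A T \<longleftrightarrow>
     (\<forall>D. D \<subseteq> A \<and> D \<noteq> {} \<and> (\<forall>x\<in>D. op_pos x) \<and>
          (\<forall>x\<in>D. \<forall>y\<in>D. \<exists>z\<in>D. op_le x z \<and> op_le y z) \<and>
          (\<exists>b\<in>BH. \<forall>x\<in>D. op_le x b)
        \<longrightarrow> (\<forall>s. op_is_lub D s \<longrightarrow> op_is_lub (T ` D) (T s)))"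

definition markov_operator :: "'i op set \<Rightarrow> ('i op \<Rightarrow> 'i op) \<Rightarrow> bool" where
  "markov_operator A T \<longleftrightarrow>
     (\<forall>x\<in>A. T x \<in> A) \<and>
     (\<forall>x\<in>A. \<forall>y\<in>A. T (op_add x y) = op_add (T x) (T y)) \<and>
     (\<forall>c. \<forall>x\<in>A. T (op_scale c x) = op_scale c (T x)) \<and>
     T id = id \<and> completely_positive A T \<and> normal_map A T"

end

theory Submission
  imports Defs
begin

text \<open>Let \<open>K\<close> bound the norm of \<open>a\<close>. Then \<open>b = 1 - a/K\<close> is a positive contraction in \<open>\<A>\<close>;
  its powers decrease strongly to the projection \<open>e\<close> onto the kernel of \<open>a\<close>, which lies in
  \<open>\<A>\<close> by the double commutant property, so minimality of the support gives \<open>p \<le> 1 - e\<close>.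
  Consequently the increasing operators \<open>d\<^sub>n = 1 - b\<^sup>n\<close> have supremum \<open>p\<close>.
  Since \<open>n \<mapsto> \<langle>x, b\<^sup>n x\<rangle>\<close> is convex, \<open>d\<^sub>n \<le> n (1 - b) = (n/K) a\<close>, hence
  \<open>0 \<le> T d\<^sub>n \<le> (n/K) T a \<le> (n/K) a\<close>, so \<open>T d\<^sub>n\<close> vanishes on the range of \<open>1 - p\<close>; together with
  \<open>T d\<^sub>n \<le> T 1 = 1\<close> this yields \<open>T d\<^sub>n \<le> p\<close>, and normality of \<open>T\<close> gives \<open>T p \<le> p\<close>.\<close>

notation ell2_inner (\<open>\<langle>_, _\<rangle>\<close>)
notation ell2_scale (infixr \<open>*\<^sub>C\<close> 75)

definition square_summable :: "('i \<Rightarrow> complex) \<Rightarrow> bool" where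
  "square_summable f \<longleftrightarrow> (\<lambda>i. (cmod (f i))\<^sup>2) summable_on UNIV"

lemma square_summable_ell2_vec [simp]: "square_summable (ell2_vec x)"
  using ell2_vec[of x] by (simp add: square_summable_def)

lemma ell2_vec_Ell2 [simp]: "square_summable f \<Longrightarrow> ell2_vec (Ell2 f) = f"
  by (simp add: Ell2_inverse square_summable_def)

lemma ell2_eqI: "(\<And>i. ell2_vec x i = ell2_vec y i) \<Longrightarrow> x = y"
  by (metis ell2_vec_inject ext)

lemma square_summable_add:
  assumes "square_summable f" "square_summable g"
  shows "square_summable (\<lambda>i. f i + g i)"
proof -
  have bound: "(cmod (f i + g i))\<^sup>2 \<le> 2 * (cmod (f i))\<^sup>2 + 2 * (cmod (g i))\<^sup>2" for i
  proof -
    have "(cmod (f i + g i))\<^sup>2 \<le> (cmod (f i) + cmod (g i))\<^sup>2"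
      by (simp add: power_mono norm_triangle_ineq)
    also have "\<dots> \<le> 2 * (cmod (f i))\<^sup>2 + 2 * (cmod (g i))\<^sup>2"
      using sum_squares_bound[of "cmod (f i)" "cmod (g i)"] by (simp add: power2_sum)
    finally show ?thesis .
  qed
  have "(\<lambda>i. 2 * (cmod (f i))\<^sup>2 + 2 * (cmod (g i))\<^sup>2) summable_on UNIV"
    using assms unfolding square_summable_def by (intro summable_on_add summable_on_cmult_right) auto
  then show ?thesis
    unfolding square_summable_def by (rule summable_on_comparison_test) (use bound in auto)
qed

lemma square_summable_scale: "square_summable f \<Longrightarrow> square_summable (\<lambda>i. c * f i)"
  unfolding square_summable_def
  by (drule summable_on_cmult_right[where c = "(cmod c)\<^sup>2"]) (simp add: norm_mult power_mult_distrib)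

lemma square_summable_mono:
  "square_summable f \<Longrightarrow> (\<And>i. cmod (g i) \<le> cmod (f i)) \<Longrightarrow> square_summable g"
  unfolding square_summable_def by (rule summable_on_comparison_test) (auto intro: power_mono)

lemma square_summable_inner_summable:
  assumes "square_summable f" "square_summable g"
  shows "(\<lambda>i. cnj (f i) * g i) summable_on UNIV"
proof (rule abs_summable_summable)
  have "(\<lambda>i. (cmod (f i))\<^sup>2 + (cmod (g i))\<^sup>2) summable_on UNIV"
    using assms unfolding square_summable_def by (intro summable_on_add) auto
  moreover have "norm (cnj (f i) * g i) \<le> (cmod (f i))\<^sup>2 + (cmod (g i))\<^sup>2" for i
    using sum_squares_bound[of "cmod (f i)" "cmod (g i)"]
      mult_nonneg_nonneg[OF norm_ge_zero[of "f i"] norm_ge_zero[of "g i"]]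
    unfolding norm_mult complex_mod_cnj by linarith
  ultimately show "(\<lambda>i. norm (cnj (f i) * g i)) summable_on UNIV"
    by (rule summable_on_comparison_test) auto
qed

lemma ell2_vec_add [simp]: "ell2_vec (ell2_add x y) i = ell2_vec x i + ell2_vec y i"
  unfolding ell2_add_def by (simp add: square_summable_add)

lemma ell2_vec_scale [simp]: "ell2_vec (ell2_scale c x) i = c * ell2_vec x i"
  unfolding ell2_scale_def by (simp add: square_summable_scale)

lemma ell2_vec_zero [simp]: "ell2_vec ell2_zero i = 0"
  unfolding ell2_zero_def by (simp add: square_summable_def)

lemma ell2_inner_ell2_add_left: "\<langle>ell2_add x y, z\<rangle> = \<langle>x, z\<rangle> + \<langle>y, z\<rangle>"
  unfolding ell2_inner_def by (simp add: distrib_right infsum_add square_summable_inner_summable)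

lemma ell2_inner_ell2_add_right: "\<langle>x, ell2_add y z\<rangle> = \<langle>x, y\<rangle> + \<langle>x, z\<rangle>"
  unfolding ell2_inner_def by (simp add: distrib_left infsum_add square_summable_inner_summable)

lemma ell2_inner_scale_left: "\<langle>ell2_scale c x, y\<rangle> = cnj c * \<langle>x, y\<rangle>"
  unfolding ell2_inner_def
  by (simp add: mult.assoc infsum_cmult_right square_summable_inner_summable)

lemma ell2_inner_scale_right: "\<langle>x, ell2_scale c y\<rangle> = c * \<langle>x, y\<rangle>"
  unfolding ell2_inner_def
  by (simp add: mult.left_commute infsum_cmult_right square_summable_inner_summable)

lemma ell2_inner_commute: "\<langle>y, x\<rangle> = cnj \<langle>x, y\<rangle>"
  unfolding ell2_inner_def by (simp flip: infsum_cnj add: mult.commute)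

lemma ell2_inner_self: "\<langle>x, x\<rangle> = complex_of_real (\<Sum>\<^sub>\<infinity>i. (cmod (ell2_vec x i))\<^sup>2)"
proof -
  have "\<langle>x, x\<rangle> = (\<Sum>\<^sub>\<infinity>i. complex_of_real ((cmod (ell2_vec x i))\<^sup>2))"
    unfolding ell2_inner_def by (intro infsum_cong) (metis complex_norm_square mult.commute)
  also have "\<dots> = complex_of_real (\<Sum>\<^sub>\<infinity>i. (cmod (ell2_vec x i))\<^sup>2)"
    using square_summable_ell2_vec[of x] unfolding square_summable_def
    by (intro infsumI) (subst has_sum_of_real_iff, rule has_sum_infsum)
  finally show ?thesis .
qed

lemma ell2_inner_self_eq_0: "Re \<langle>x, x\<rangle> = 0 \<Longrightarrow> x = ell2_zero"
proof (rule ell2_eqI)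
  fix i assume "Re \<langle>x, x\<rangle> = 0"
  then have "(\<Sum>\<^sub>\<infinity>i. (cmod (ell2_vec x i))\<^sup>2) = 0"
    unfolding ell2_inner_self by simp
  then have "(cmod (ell2_vec x i))\<^sup>2 = 0"
    using nonneg_infsum_le_0D[of "\<lambda>i. (cmod (ell2_vec x i))\<^sup>2" UNIV i] square_summable_ell2_vec[of x]
    unfolding square_summable_def by simp
  then show "ell2_vec x i = ell2_vec ell2_zero i" by simp
qed

instantiation ell2 :: (type) real_inner
begin

definition zero_ell2_def: "0 = ell2_zero"
definition plus_ell2_def: "x + y = ell2_add x y"
definition uminus_ell2_def: "- x = ell2_scale (-1) x"
definition minus_ell2_def: "x - y = ell2_add x (ell2_scale (-1) y)"
definition scaleR_ell2_def: "scaleR r x = ell2_scale (complex_of_real r) x"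
definition norm_ell2_def: "norm x = ell2_norm x"
definition sgn_ell2_def: "sgn x = scaleR (inverse (norm x)) (x::'a ell2)"
definition dist_ell2_def: "dist x y = norm (x - (y::'a ell2))"
definition uniformity_ell2_def:
  "(uniformity :: ('a ell2 \<times> 'a ell2) filter) = (INF e\<in>{0<..}. principal {(x, y). dist x y < (e::real)})"
definition open_ell2_def:
  "open U = (\<forall>x\<in>U. \<forall>\<^sub>F (x', y) in uniformity. x' = x \<longrightarrow> y \<in> (U::'a ell2 set))"
definition inner_ell2_def: "inner x y = Re \<langle>x, y\<rangle>"

instance proof
  fix x y z :: "'a ell2" and a b :: real and U :: "'a ell2 set"
  show "x + y + z = x + (y + z)" "x + y = y + x" "0 + x = x" "- x + x = 0" "x - y = x + - y"
    "a *\<^sub>R (x + y) = a *\<^sub>R x + a *\<^sub>R y" "(a + b) *\<^sub>R x = a *\<^sub>R x + b *\<^sub>R x"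
    "a *\<^sub>R b *\<^sub>R x = (a * b) *\<^sub>R x" "1 *\<^sub>R x = x"
    unfolding plus_ell2_def zero_ell2_def uminus_ell2_def minus_ell2_def scaleR_ell2_def
    by (auto intro!: ell2_eqI simp: algebra_simps)
  show "sgn x = inverse (norm x) *\<^sub>R x" by (fact sgn_ell2_def)
  show "dist x y = norm (x - y)" by (fact dist_ell2_def)
  show "(uniformity :: ('a ell2 \<times> 'a ell2) filter) = (INF e\<in>{0<..}. principal {(x, y). dist x y < e})"
    by (fact uniformity_ell2_def)
  show "open U = (\<forall>x\<in>U. \<forall>\<^sub>F (x', y) in uniformity. x' = x \<longrightarrow> y \<in> U)"
    by (fact open_ell2_def)
  show "inner x y = inner y x"
    unfolding inner_ell2_def by (subst ell2_inner_commute) simp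
  show "inner (x + y) z = inner x z + inner y z"
    unfolding inner_ell2_def plus_ell2_def by (simp add: ell2_inner_ell2_add_left)
  show "inner (a *\<^sub>R x) y = a * inner x y"
    unfolding inner_ell2_def scaleR_ell2_def by (simp add: ell2_inner_scale_left)
  show "0 \<le> inner x x"
    unfolding inner_ell2_def ell2_inner_self by (simp add: infsum_nonneg)
  show "(inner x x = 0) = (x = 0)"
    unfolding inner_ell2_def zero_ell2_def using ell2_inner_self_eq_0
    by (auto simp: ell2_inner_def)
  show "norm x = sqrt (inner x x)"
    by (simp add: norm_ell2_def ell2_norm_def inner_ell2_def)
qed

end

lemma ell2_vec_0 [simp]: "ell2_vec 0 i = 0" by (simp add: zero_ell2_def)
lemma ell2_vec_plus [simp]: "ell2_vec (x + y) i = ell2_vec x i + ell2_vec y i"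
  by (simp add: plus_ell2_def)
lemma ell2_vec_uminus [simp]: "ell2_vec (- x) i = - ell2_vec x i" by (simp add: uminus_ell2_def)
lemma ell2_vec_minus [simp]: "ell2_vec (x - y) i = ell2_vec x i - ell2_vec y i"
  by (simp add: minus_ell2_def)
lemma ell2_vec_scaleR [simp]: "ell2_vec (r *\<^sub>R x) i = complex_of_real r * ell2_vec x i"
  by (simp add: scaleR_ell2_def)

lemma power2_norm_ell2: "(norm x)\<^sup>2 = (\<Sum>\<^sub>\<infinity>i. (cmod (ell2_vec x i))\<^sup>2)"
  by (simp add: norm_ell2_def ell2_norm_def ell2_inner_self infsum_nonneg)

lemma sum_le_power2_norm_ell2:
  "finite F \<Longrightarrow> (\<Sum>i\<in>F. (cmod (ell2_vec x i))\<^sup>2) \<le> (norm x)\<^sup>2"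
  unfolding power2_norm_ell2 using square_summable_ell2_vec[of x]
  by (intro finite_sum_le_infsum) (auto simp: square_summable_def)

lemma norm_ell2_vec_le: "cmod (ell2_vec x i) \<le> norm x"
  by (rule power2_le_imp_le) (use sum_le_power2_norm_ell2[of "{i}" x] in simp_all)

lemma square_summable_finite_sums_bounded:
  assumes "\<And>F. finite F \<Longrightarrow> (\<Sum>i\<in>F. (cmod (f i))\<^sup>2) \<le> B"
  shows "square_summable f" and "(\<Sum>\<^sub>\<infinity>i. (cmod (f i))\<^sup>2) \<le> B"
proof -
  show "square_summable f"
    unfolding square_summable_def
    by (rule nonneg_bdd_above_summable_on) (auto intro!: bdd_aboveI assms)
  then show "(\<Sum>\<^sub>\<infinity>i. (cmod (f i))\<^sup>2) \<le> B"
    unfolding square_summable_def using assms by (intro infsum_le_finite_sums) auto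
qed

text \<open>The coordinates converge; the Cauchy bound on finite partial sums of squared coordinate
  differences survives the coordinatewise limit, so the limit is square summable and a norm limit.\<close>

lemma Cauchy_ell2_convergent:
  fixes X :: "nat \<Rightarrow> 'i ell2"
  assumes "Cauchy X"
  shows "convergent X"
proof -
  have "Cauchy (\<lambda>n. ell2_vec (X n) i)" for i
  proof (rule CauchyI)
    fix e :: real assume "0 < e"
    then obtain M where "\<forall>m\<ge>M. \<forall>n\<ge>M. norm (X m - X n) < e" using CauchyD[OF assms] by blast
    moreover have "norm (ell2_vec (X m) i - ell2_vec (X n) i) \<le> norm (X m - X n)" for m n
      using norm_ell2_vec_le[of "X m - X n" i] by simp
    ultimately show "\<exists>M. \<forall>m\<ge>M. \<forall>n\<ge>M. norm (ell2_vec (X m) i - ell2_vec (X n) i) < e"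
      by (meson le_less_trans)
  qed
  then obtain f where f: "\<And>i. (\<lambda>n. ell2_vec (X n) i) \<longlonglongrightarrow> f i"
    unfolding Cauchy_convergent_iff convergent_def by (metis (full_types))
  have tail: "\<exists>N. \<forall>n\<ge>N. \<forall>F. finite F \<longrightarrow> (\<Sum>i\<in>F. (cmod (ell2_vec (X n) i - f i))\<^sup>2) \<le> e\<^sup>2"
    if "e > 0" for e
  proof -
    obtain N where N: "\<forall>m\<ge>N. \<forall>n\<ge>N. norm (X m - X n) < e" using CauchyD[OF assms \<open>e > 0\<close>] by blast
    have "(\<Sum>i\<in>F. (cmod (ell2_vec (X n) i - f i))\<^sup>2) \<le> e\<^sup>2" if "n \<ge> N" "finite F" for n F
    proof (rule LIMSEQ_le_const2)
      show "(\<lambda>m. \<Sum>i\<in>F. (cmod (ell2_vec (X n) i - ell2_vec (X m) i))\<^sup>2) \<longlonglongrightarrow>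
            (\<Sum>i\<in>F. (cmod (ell2_vec (X n) i - f i))\<^sup>2)"
        by (intro tendsto_intros f)
      have "(\<Sum>i\<in>F. (cmod (ell2_vec (X n) i - ell2_vec (X m) i))\<^sup>2) \<le> e\<^sup>2" if "m \<ge> N" for m
      proof -
        have "(norm (X n - X m))\<^sup>2 \<le> e\<^sup>2"
          using N \<open>n \<ge> N\<close> that by (intro power_mono) (auto simp: less_imp_le)
        then show ?thesis using sum_le_power2_norm_ell2[OF \<open>finite F\<close>, of "X n - X m"] by simp
      qed
      then show "\<exists>M. \<forall>m\<ge>M. (\<Sum>i\<in>F. (cmod (ell2_vec (X n) i - ell2_vec (X m) i))\<^sup>2) \<le> e\<^sup>2"
        by blast
    qed
    then show ?thesis by blast
  qed
  obtain N1 where "\<And>n F. n \<ge> N1 \<Longrightarrow> finite F \<Longrightarrow> (\<Sum>i\<in>F. (cmod (ell2_vec (X n) i - f i))\<^sup>2) \<le> 1\<^sup>2"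
    using tail[of 1] by auto
  then have "square_summable (\<lambda>i. ell2_vec (X N1) i - f i)"
    by (intro square_summable_finite_sums_bounded(1)) auto
  then have "square_summable (\<lambda>i. ell2_vec (X N1) i + (-1) * (ell2_vec (X N1) i - f i))"
    by (intro square_summable_add square_summable_scale) auto
  then have vec_L: "ell2_vec (Ell2 f) = f" by simp
  have "X \<longlonglongrightarrow> Ell2 f"
  proof (rule LIMSEQ_I)
    fix r :: real assume "0 < r"
    then obtain N where N: "\<And>n F. n \<ge> N \<Longrightarrow> finite F \<Longrightarrow>
        (\<Sum>i\<in>F. (cmod (ell2_vec (X n) i - f i))\<^sup>2) \<le> (r/2)\<^sup>2"
      using tail[of "r/2"] by auto
    have "norm (X n - Ell2 f) < r" if "n \<ge> N" for n
    proof -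
      have "(norm (X n - Ell2 f))\<^sup>2 \<le> (r/2)\<^sup>2"
        unfolding power2_norm_ell2 ell2_vec_minus vec_L
        by (rule square_summable_finite_sums_bounded(2)) (rule N[OF that])
      then have "norm (X n - Ell2 f) \<le> r/2" by (rule power2_le_imp_le) (use \<open>0 < r\<close> in simp)
      then show ?thesis using \<open>0 < r\<close> by simp
    qed
    then show "\<exists>N. \<forall>n\<ge>N. norm (X n - Ell2 f) < r" by blast
  qed
  then show "convergent X" unfolding convergent_def by blast
qed

instance ell2 :: (type) complete_space
  by standard (rule Cauchy_ell2_convergent)

lemma ell2_inner_add_left: "\<langle>x + y, z\<rangle> = \<langle>x, z\<rangle> + \<langle>y, z\<rangle>"
  by (simp add: plus_ell2_def ell2_inner_ell2_add_left)

lemma ell2_inner_add_right: "\<langle>x, y + z\<rangle> = \<langle>x, y\<rangle> + \<langle>x, z\<rangle>"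
  by (simp add: plus_ell2_def ell2_inner_ell2_add_right)

lemma ell2_inner_scaleR_left: "\<langle>r *\<^sub>R x, y\<rangle> = of_real r * \<langle>x, y\<rangle>"
  by (simp add: scaleR_ell2_def ell2_inner_scale_left)

lemma ell2_inner_scaleR_right: "\<langle>x, r *\<^sub>R y\<rangle> = of_real r * \<langle>x, y\<rangle>"
  by (simp add: scaleR_ell2_def ell2_inner_scale_right)

lemma ell2_inner_diff_left: "\<langle>x - y, z\<rangle> = \<langle>x, z\<rangle> - \<langle>y, z\<rangle>"
  by (simp add: minus_ell2_def ell2_inner_ell2_add_left ell2_inner_scale_left)

lemma ell2_inner_diff_right: "\<langle>x, y - z\<rangle> = \<langle>x, y\<rangle> - \<langle>x, z\<rangle>"
  by (simp add: minus_ell2_def ell2_inner_ell2_add_right ell2_inner_scale_right)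

lemma ell2_inner_self_eq_norm: "\<langle>x, x\<rangle> = of_real ((norm x)\<^sup>2)"
  by (simp add: ell2_inner_self power2_norm_ell2)

lemma Re_ell2_inner_self [simp]: "Re \<langle>x, x\<rangle> = (norm x)\<^sup>2"
  by (simp add: ell2_inner_self_eq_norm)

lemma ell2_inner_zero_left [simp]: "\<langle>0, y\<rangle> = 0"
  using ell2_inner_scaleR_left[of 0 0 y] by simp

lemma ell2_inner_zero_right [simp]: "\<langle>x, 0\<rangle> = 0"
  using ell2_inner_scaleR_right[of x 0 0] by simp

lemma Im_ell2_inner_self [simp]: "Im \<langle>x, x\<rangle> = 0"
  by (simp add: ell2_inner_self_eq_norm)

lemma ell2_vec_sum: "ell2_vec (sum f S) j = (\<Sum>i\<in>S. ell2_vec (f i) j)"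
  by (induction S rule: infinite_finite_induct) auto

lemma ell2_inner_sum_left: "\<langle>sum f S, y\<rangle> = (\<Sum>i\<in>S. \<langle>f i, y\<rangle>)"
  by (induction S rule: infinite_finite_induct) (auto simp: ell2_inner_add_left)

lemma ell2_scale_add_right: "c *\<^sub>C (x + y) = c *\<^sub>C x + c *\<^sub>C y"
  by (rule ell2_eqI) (simp add: algebra_simps)

lemma ell2_scale_scale: "c *\<^sub>C d *\<^sub>C x = (c * d) *\<^sub>C x"
  by (rule ell2_eqI) simp

lemma ell2_scale_of_real: "complex_of_real r *\<^sub>C x = r *\<^sub>R x"
  by (rule ell2_eqI) simp

lemma ell2_scale_minus_one: "(-1) *\<^sub>C x = - x"
  by (rule ell2_eqI) simp

lemma norm_ell2_scale: "norm (c *\<^sub>C x) = cmod c * norm x"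
proof -
  have "(norm (c *\<^sub>C x))\<^sup>2 = (\<Sum>\<^sub>\<infinity>i. (cmod c)\<^sup>2 * (cmod (ell2_vec x i))\<^sup>2)"
    unfolding power2_norm_ell2 by (simp add: norm_mult power_mult_distrib)
  also have "\<dots> = (cmod c * norm x)\<^sup>2"
    unfolding power2_norm_ell2 power_mult_distrib by (rule infsum_cmult_right')
  finally show ?thesis by (simp add: power2_eq_iff_nonneg)
qed

lemma bounded_linear_ell2_scale: "bounded_linear (ell2_scale c)"
  by (rule bounded_linear_intro[of _ "cmod c"])
    (auto simp: ell2_scale_add_right ell2_scale_scale norm_ell2_scale scaleR_conv_of_real
      mult.commute ell2_scale_of_real[symmetric])

lemma BH_iff: "X \<in> BH \<longleftrightarrow> bounded_op X"
  by (simp add: BH_def)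

lemma bounded_opI:
  assumes "\<And>x y. X (x + y) = X x + X y" "\<And>c x. X (c *\<^sub>C x) = c *\<^sub>C X x"
    and "\<And>x. norm (X x) \<le> K * norm x"
  shows "bounded_op X"
  using assms unfolding bounded_op_def plus_ell2_def norm_ell2_def by blast

context
  fixes X :: "'i op"
  assumes X: "bounded_op X"
begin

lemma bounded_op_add: "X (x + y) = X x + X y"
  using X by (simp add: bounded_op_def plus_ell2_def)

lemma bounded_op_scale: "X (c *\<^sub>C x) = c *\<^sub>C X x"
  using X by (simp add: bounded_op_def)

lemma bounded_op_scaleR: "X (r *\<^sub>R x) = r *\<^sub>R X x"
  using bounded_op_scale[of "of_real r" x] by (simp add: ell2_scale_of_real)

lemma bounded_op_uminus: "X (- x) = - X x"
  using bounded_op_scale[of "-1" x] by (simp add: ell2_scale_minus_one)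

lemma bounded_op_diff: "X (x - y) = X x - X y"
  unfolding diff_conv_add_uminus by (simp only: bounded_op_add bounded_op_uminus)

lemma bounded_op_zero: "X 0 = 0"
  using bounded_op_scaleR[of 0 0] by simp

lemma bounded_op_sum: "X (sum f S) = (\<Sum>i\<in>S. X (f i))"
  by (induction S rule: infinite_finite_induct) (auto simp: bounded_op_zero bounded_op_add)

lemma bounded_op_bound: "\<exists>K>0. \<forall>x. norm (X x) \<le> K * norm x"
proof -
  obtain K where K: "\<And>x. norm (X x) \<le> K * norm x"
    using X by (auto simp: bounded_op_def norm_ell2_def)
  have "norm (X x) \<le> max K 1 * norm x" for x
    using K[of x] mult_right_mono[of K "max K 1" "norm x"] by simp
  then show ?thesis by (intro exI[of _ "max K 1"]) auto
qed

lemma bounded_op_bounded_linear: "bounded_linear X"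
proof -
  obtain K where "\<forall>x. norm (X x) \<le> K * norm x" using bounded_op_bound by blast
  then show ?thesis
    by (intro bounded_linear_intro[of _ K]) (auto simp: bounded_op_add bounded_op_scaleR mult.commute)
qed

lemma bounded_op_tendsto: "(f \<longlongrightarrow> l) F \<Longrightarrow> ((\<lambda>n. X (f n)) \<longlongrightarrow> X l) F"
  using bounded_linear.tendsto[OF bounded_op_bounded_linear] by blast

end

lemma bounded_op_id: "bounded_op id"
  by (rule bounded_opI[where K = 1]) auto

lemma op_scale_apply [simp]: "op_scale c X x = c *\<^sub>C X x"
  by (simp add: op_scale_def)

lemma op_minus_apply [simp]: "op_minus X Y x = X x - Y x"
  by (simp add: op_minus_def op_add_def op_scale_def minus_ell2_def)

lemma op_pos_iff: "op_pos X \<longleftrightarrow> (\<forall>x. Im \<langle>x, X x\<rangle> = 0 \<and> 0 \<le> Re \<langle>x, X x\<rangle>)"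
  by (simp add: op_pos_def cnonneg_def)

lemma op_le_iff:
  "op_le X Y \<longleftrightarrow> (\<forall>x. Im \<langle>x, X x\<rangle> = Im \<langle>x, Y x\<rangle> \<and> Re \<langle>x, X x\<rangle> \<le> Re \<langle>x, Y x\<rangle>)"
  by (auto simp: op_le_def op_pos_iff ell2_inner_diff_right)

definition hermitian :: "'i op \<Rightarrow> bool" where
  "hermitian X \<longleftrightarrow> (\<forall>x y. \<langle>x, X y\<rangle> = \<langle>X x, y\<rangle>)"

lemma hermitian_Im_form: "hermitian X \<Longrightarrow> Im \<langle>x, X x\<rangle> = 0"
  by (metis hermitian_def ell2_inner_commute cnj.sel(2) add.inverse_inverse neg_equal_zero)

text \<open>Polarization: the sesquilinear form is recovered from its values on the diagonal.\<close>

lemma hermitian_if_real_form: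
  assumes X: "bounded_op X" and real: "\<And>x. Im \<langle>x, X x\<rangle> = 0"
  shows "hermitian X"
  unfolding hermitian_def
proof (intro allI)
  fix x y
  define B where "B u v = \<langle>u, X v\<rangle>" for u v
  have real_B: "Im (B u u) = 0" for u using real by (simp add: B_def)
  have "B (x + y) (x + y) = B x x + B x y + B y x + B y y"
    by (simp add: B_def bounded_op_add[OF X] ell2_inner_add_left ell2_inner_add_right)
  then have Im: "Im (B x y) + Im (B y x) = 0"
    using real_B[of "x + y"] real_B[of x] real_B[of y] by simp
  have "B (x + \<i> *\<^sub>C y) (x + \<i> *\<^sub>C y) = B x x + \<i> * B x y - \<i> * B y x + B y y"
    by (simp add: B_def bounded_op_add[OF X] bounded_op_scale[OF X] ell2_inner_add_left
        ell2_inner_add_right ell2_inner_scale_left ell2_inner_scale_right algebra_simps)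
  then have Re: "Re (B x y) - Re (B y x) = 0"
    using real_B[of "x + \<i> *\<^sub>C y"] real_B[of x] real_B[of y] by simp
  have "B x y = cnj (B y x)" using Im Re by (simp add: complex_eq_iff)
  then show "\<langle>x, X y\<rangle> = \<langle>X x, y\<rangle>" by (simp add: B_def ell2_inner_commute[of "X x" y])
qed

lemma op_pos_hermitian: "bounded_op X \<Longrightarrow> op_pos X \<Longrightarrow> hermitian X"
  by (rule hermitian_if_real_form) (auto simp: op_pos_iff)

lemma quadratic_nonneg_discriminant:
  fixes A B C :: real
  assumes nonneg: "\<And>t. 0 \<le> A - 2 * t * B + t\<^sup>2 * C" and "C \<ge> 0"
  shows "B\<^sup>2 \<le> A * C"
proof (cases "C = 0")
  case False
  then have "C > 0" using \<open>C \<ge> 0\<close> by simp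
  have "0 \<le> A - 2 * (B / C) * B + (B / C)\<^sup>2 * C" by (rule nonneg)
  also have "\<dots> = A - B\<^sup>2 / C" using \<open>C > 0\<close> by (simp add: power2_eq_square field_simps)
  finally show ?thesis using \<open>C > 0\<close> by (simp add: field_simps)
next
  case True
  have "B = 0"
  proof (rule ccontr)
    assume "B \<noteq> 0"
    have "0 \<le> A - 2 * ((A + 1) / (2 * B)) * B" using nonneg[of "(A + 1) / (2 * B)"] True by simp
    also have "\<dots> = -1" using \<open>B \<noteq> 0\<close> by (simp add: field_simps)
    finally show False by simp
  qed
  then show ?thesis using True by simp
qed

text \<open>Rotating \<open>v\<close> by a phase makes \<open>\<langle>u, H v\<rangle>\<close> real, after which the classical
  discriminant argument applies to \<open>t \<mapsto> \<langle>u - t v, H (u - t v)\<rangle>\<close>.\<close>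

lemma op_pos_cauchy_schwarz:
  assumes H: "bounded_op H" and pos: "op_pos H"
  shows "(cmod \<langle>u, H v\<rangle>)\<^sup>2 \<le> Re \<langle>u, H u\<rangle> * Re \<langle>v, H v\<rangle>"
proof (cases "\<langle>u, H v\<rangle> = 0")
  case True
  then show ?thesis using pos by (simp add: op_pos_iff)
next
  case False
  define \<beta> where "\<beta> = \<langle>u, H v\<rangle>"
  define w where "w = cnj \<beta> / of_real (cmod \<beta>)"
  define v' where "v' = w *\<^sub>C v"
  have uv': "\<langle>u, H v'\<rangle> = of_real (cmod \<beta>)"
    using False by (simp add: v'_def bounded_op_scale[OF H] ell2_inner_scale_right w_def
        \<beta>_def[symmetric] complex_norm_square[symmetric] field_simps power2_eq_square)
  have v'u: "\<langle>v', H u\<rangle> = of_real (cmod \<beta>)"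
    using uv' op_pos_hermitian[OF H pos] by (metis hermitian_def ell2_inner_commute complex_cnj_complex_of_real)
  have "cnj w * w = 1"
    using False by (simp add: w_def \<beta>_def complex_norm_square[symmetric] field_simps power2_eq_square)
  then have v'v': "\<langle>v', H v'\<rangle> = \<langle>v, H v\<rangle>"
    by (simp add: v'_def bounded_op_scale[OF H] ell2_inner_scale_right ell2_inner_scale_left mult.commute)
  have "0 \<le> Re \<langle>u, H u\<rangle> - 2 * t * cmod \<beta> + t\<^sup>2 * Re \<langle>v, H v\<rangle>" for t
  proof -
    have "0 \<le> Re \<langle>u - t *\<^sub>R v', H (u - t *\<^sub>R v')\<rangle>" using pos by (simp add: op_pos_iff)
    also have "\<langle>u - t *\<^sub>R v', H (u - t *\<^sub>R v')\<rangle> =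
        \<langle>u, H u\<rangle> - of_real t * \<langle>u, H v'\<rangle> - of_real t * \<langle>v', H u\<rangle> + of_real t * of_real t * \<langle>v', H v'\<rangle>"
      by (simp add: bounded_op_diff[OF H] bounded_op_scaleR[OF H] ell2_inner_diff_left
          ell2_inner_diff_right ell2_inner_scaleR_left ell2_inner_scaleR_right algebra_simps)
    finally show ?thesis unfolding uv' v'u v'v' by (simp add: power2_eq_square)
  qed
  then have "(cmod \<beta>)\<^sup>2 \<le> Re \<langle>u, H u\<rangle> * Re \<langle>v, H v\<rangle>"
    by (rule quadratic_nonneg_discriminant) (use pos in \<open>simp add: op_pos_iff\<close>)
  then show ?thesis by (simp add: \<beta>_def)
qed

lemma ell2_inner_cauchy_schwarz: "cmod \<langle>x, y\<rangle> \<le> norm x * norm y"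
proof -
  have "(cmod \<langle>x, id y\<rangle>)\<^sup>2 \<le> Re \<langle>x, id x\<rangle> * Re \<langle>y, id y\<rangle>"
    by (rule op_pos_cauchy_schwarz[OF bounded_op_id]) (simp add: op_pos_iff)
  then have "(cmod \<langle>x, y\<rangle>)\<^sup>2 \<le> (norm x * norm y)\<^sup>2" by (simp add: power_mult_distrib)
  then show ?thesis by (rule power2_le_imp_le) simp
qed

lemma op_pos_form_eq_0:
  assumes X: "bounded_op X" and pos: "op_pos X" and "\<langle>x, X x\<rangle> = 0"
  shows "X x = 0"
proof -
  have "\<langle>x, X (X x)\<rangle> = \<langle>X x, X x\<rangle>"
    using op_pos_hermitian[OF X pos] by (simp add: hermitian_def)
  moreover have "(cmod \<langle>x, X (X x)\<rangle>)\<^sup>2 \<le> Re \<langle>x, X x\<rangle> * Re \<langle>X x, X (X x)\<rangle>"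
    by (rule op_pos_cauchy_schwarz[OF X pos])
  ultimately have "(norm (X x))\<^sup>2 = 0"
    using \<open>\<langle>x, X x\<rangle> = 0\<close> by (simp add: ell2_inner_self_eq_norm)
  then show ?thesis by simp
qed

lemma Re_form_le_bound: "bounded_op a \<Longrightarrow> (\<And>x. norm (a x) \<le> K * norm x) \<Longrightarrow> Re \<langle>x, a x\<rangle> \<le> K * (norm x)\<^sup>2"
  using complex_Re_le_cmod[of "\<langle>x, a x\<rangle>"] ell2_inner_cauchy_schwarz[of x "a x"]
    mult_left_mono[of "norm (a x)" "K * norm x" "norm x"]
  by (simp add: power2_eq_square algebra_simps)

lemma op_pos_power2_norm_le:
  assumes a: "bounded_op a" "op_pos a" and K: "\<And>x. norm (a x) \<le> K * norm x" "K > 0"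
  shows "(norm (a x))\<^sup>2 \<le> K * Re \<langle>x, a x\<rangle>"
proof -
  have "\<langle>x, a (a x)\<rangle> = of_real ((norm (a x))\<^sup>2)"
    using op_pos_hermitian[OF a] by (simp add: hermitian_def ell2_inner_self_eq_norm)
  then have "((norm (a x))\<^sup>2)\<^sup>2 \<le> Re \<langle>x, a x\<rangle> * Re \<langle>a x, a (a x)\<rangle>"
    using op_pos_cauchy_schwarz[OF a, of x "a x"] by (simp only: norm_of_real abs_power2)
  also have "\<dots> \<le> Re \<langle>x, a x\<rangle> * (K * (norm (a x))\<^sup>2)"
    using Re_form_le_bound[OF a(1) K(1), of "a x"] a(2) by (intro mult_left_mono) (auto simp: op_pos_iff)
  finally have le: "(norm (a x))\<^sup>2 * (norm (a x))\<^sup>2 \<le> (norm (a x))\<^sup>2 * (K * Re \<langle>x, a x\<rangle>)"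
    by (simp add: power2_eq_square algebra_simps)
  show ?thesis
  proof (cases "a x = 0")
    case False
    then have "0 < (norm (a x))\<^sup>2" by simp
    with le show ?thesis by (simp only: mult_le_cancel_left_pos)
  qed (use K(2) a(2) in \<open>simp add: op_pos_iff\<close>)
qed

lemma op_le_trans: "op_le X Y \<Longrightarrow> op_le Y Z \<Longrightarrow> op_le X Z"
  unfolding op_le_iff by (metis order_trans)

lemma op_le_scale:
  "op_le X Y \<Longrightarrow> 0 \<le> c \<Longrightarrow> op_le (op_scale (of_real c) X) (op_scale (of_real c) Y)"
  unfolding op_le_iff by (simp add: ell2_inner_scale_right mult_left_mono)

lemma op_pos_le_apply_eq_0:
  assumes X: "bounded_op X" "op_pos X" and "op_le X Y" and "\<langle>v, Y v\<rangle> = 0"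
  shows "X v = 0"
proof (rule op_pos_form_eq_0[OF X])
  have "Re \<langle>v, X v\<rangle> \<le> 0" "Im \<langle>v, X v\<rangle> = 0"
    using \<open>op_le X Y\<close> \<open>\<langle>v, Y v\<rangle> = 0\<close> by (auto simp: op_le_iff dest: spec[of _ v])
  moreover have "0 \<le> Re \<langle>v, X v\<rangle>" using X(2) by (simp add: op_pos_iff)
  ultimately show "\<langle>v, X v\<rangle> = 0" by (simp add: complex_eq_iff)
qed

lemma bounded_linear_ell2_inner_left: "bounded_linear (\<lambda>x. \<langle>x, y\<rangle>)"
  by (rule bounded_linear_intro[of _ "norm y"])
    (auto simp: ell2_inner_add_left ell2_inner_scaleR_left scaleR_conv_of_real ell2_inner_cauchy_schwarz)

lemma bounded_linear_ell2_inner_right: "bounded_linear (\<lambda>y. \<langle>x, y\<rangle>)"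
  by (rule bounded_linear_intro[of _ "norm x"])
    (auto simp: ell2_inner_add_right ell2_inner_scaleR_right scaleR_conv_of_real
      ell2_inner_cauchy_schwarz[of x, unfolded mult.commute[of "norm x"]])

lemma tendsto_ell2_inner_left: "(f \<longlongrightarrow> l) F \<Longrightarrow> ((\<lambda>n. \<langle>f n, y\<rangle>) \<longlongrightarrow> \<langle>l, y\<rangle>) F"
  using bounded_linear.tendsto[OF bounded_linear_ell2_inner_left] by blast

lemma tendsto_ell2_inner_right: "(f \<longlongrightarrow> l) F \<Longrightarrow> ((\<lambda>n. \<langle>x, f n\<rangle>) \<longlongrightarrow> \<langle>x, l\<rangle>) F"
  using bounded_linear.tendsto[OF bounded_linear_ell2_inner_right] by blast

definition ell2_basis :: "'i \<Rightarrow> 'i ell2" where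
  "ell2_basis i = Ell2 (\<lambda>j. if j = i then 1 else 0)"

definition ell2_restrict :: "'i set \<Rightarrow> 'i ell2 \<Rightarrow> 'i ell2" where
  "ell2_restrict F x = Ell2 (\<lambda>j. if j \<in> F then ell2_vec x j else 0)"

lemma ell2_vec_basis [simp]: "ell2_vec (ell2_basis i) j = (if j = i then 1 else 0)"
proof -
  have "((\<lambda>j. (cmod (if j = i then 1 else (0::complex)))\<^sup>2) has_sum 1) UNIV"
    by (subst has_sum_cong_neutral[where T = "{i}" and g = "\<lambda>_. 1"]) (auto intro: has_sum_finiteI)
  then have "square_summable (\<lambda>j. if j = i then 1 else (0::complex))"
    unfolding square_summable_def summable_on_def by blast
  then show ?thesis unfolding ell2_basis_def by simp
qed

lemma ell2_vec_restrict [simp]: "ell2_vec (ell2_restrict F x) j = (if j \<in> F then ell2_vec x j else 0)"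
proof -
  have "square_summable (\<lambda>j. if j \<in> F then ell2_vec x j else 0)"
    by (rule square_summable_mono[OF square_summable_ell2_vec[of x]]) auto
  then show ?thesis unfolding ell2_restrict_def by simp
qed

lemma ell2_restrict_eq_sum_basis:
  "finite F \<Longrightarrow> ell2_restrict F x = (\<Sum>i\<in>F. ell2_vec x i *\<^sub>C ell2_basis i)"
  by (rule ell2_eqI) (auto simp: ell2_vec_sum if_distrib cong: if_cong)

lemma power2_norm_sum_basis:
  assumes "finite F"
  shows "(norm (\<Sum>i\<in>F. c i *\<^sub>C ell2_basis i))\<^sup>2 = (\<Sum>i\<in>F. (cmod (c i))\<^sup>2)"
proof -
  have "ell2_vec (\<Sum>i\<in>F. c i *\<^sub>C ell2_basis i) j = (if j \<in> F then c j else 0)" for j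
    using assms by (auto simp: ell2_vec_sum if_distrib cong: if_cong)
  moreover have "((\<lambda>j. (cmod (if j \<in> F then c j else 0))\<^sup>2) has_sum (\<Sum>i\<in>F. (cmod (c i))\<^sup>2)) UNIV"
    using assms by (subst has_sum_cong_neutral[where T = F and g = "\<lambda>i. (cmod (c i))\<^sup>2"]) auto
  ultimately show ?thesis unfolding power2_norm_ell2 by (simp add: infsumI)
qed

lemma ell2_restrict_tendsto: "((\<lambda>F. ell2_restrict F x) \<longlongrightarrow> x) (finite_subsets_at_top UNIV)"
proof (rule tendstoI)
  fix e :: real assume "e > 0"
  define g where "g j = (cmod (ell2_vec x j))\<^sup>2" for j
  have g: "(g has_sum (norm x)\<^sup>2) UNIV"
    using square_summable_ell2_vec[of x] unfolding square_summable_def g_def power2_norm_ell2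
    by (simp add: has_sum_infsum)
  obtain F0 where "finite F0" and F0: "dist (sum g F0) ((norm x)\<^sup>2) \<le> e\<^sup>2/2"
    using has_sum_finite_approximation[OF g, of "e\<^sup>2/2"] \<open>e > 0\<close> by auto
  have tail: "(norm (x - ell2_restrict F x))\<^sup>2 = (norm x)\<^sup>2 - sum g F" if "finite F" for F
  proof -
    have "((\<lambda>j. if j \<in> F then g j else 0) has_sum sum g F) UNIV"
      using that by (subst has_sum_cong_neutral[where T = F and g = g]) auto
    from has_sum_add[OF g has_sum_uminusI[OF this]]
    have "((\<lambda>j. (cmod (ell2_vec (x - ell2_restrict F x) j))\<^sup>2) has_sum ((norm x)\<^sup>2 + - sum g F)) UNIV"
      by (rule has_sum_cong[THEN iffD1, rotated]) (auto simp: g_def)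
    from infsumI[OF this] show ?thesis unfolding power2_norm_ell2 by simp
  qed
  have "dist (ell2_restrict F x) x < e" if "finite F" "F0 \<subseteq> F" for F
  proof -
    have "sum g F0 \<le> sum g F" using that by (intro sum_mono2) (auto simp: g_def)
    moreover have "(norm x)\<^sup>2 - sum g F0 \<le> e\<^sup>2/2" using F0 unfolding dist_real_def by linarith
    moreover have "0 < e\<^sup>2" using \<open>e > 0\<close> by simp
    ultimately have "(norm (x - ell2_restrict F x))\<^sup>2 < e\<^sup>2"
      unfolding tail[OF \<open>finite F\<close>] by linarith
    then have "norm (x - ell2_restrict F x) < e" by (rule power_less_imp_less_base) (use \<open>e > 0\<close> in simp)
    then show ?thesis by (simp add: dist_norm norm_minus_commute)
  qed
  then show "eventually (\<lambda>F. dist (ell2_restrict F x) x < e) (finite_subsets_at_top UNIV)"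
    unfolding eventually_finite_subsets_at_top using \<open>finite F0\<close> by blast
qed

text \<open>The candidate adjoint has coordinates \<open>\<langle>X \<delta>\<^sub>i, y\<rangle>\<close>; this bound makes them square summable.\<close>

lemma adjoint_coordinates_bound:
  assumes X: "bounded_op X" and K: "\<And>x. norm (X x) \<le> K * norm x" "K > 0" and "finite F"
  shows "(\<Sum>i\<in>F. (cmod \<langle>X (ell2_basis i), y\<rangle>)\<^sup>2) \<le> (K * norm y)\<^sup>2"
proof -
  define c where "c i = \<langle>X (ell2_basis i), y\<rangle>" for i
  define z where "z = (\<Sum>i\<in>F. c i *\<^sub>C ell2_basis i)"
  have norm_z: "(norm z)\<^sup>2 = (\<Sum>i\<in>F. (cmod (c i))\<^sup>2)"
    unfolding z_def using \<open>finite F\<close> by (rule power2_norm_sum_basis)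
  have "\<langle>X z, y\<rangle> = (\<Sum>i\<in>F. cnj (c i) * c i)"
    unfolding z_def bounded_op_sum[OF X] ell2_inner_sum_left
    by (simp add: bounded_op_scale[OF X] ell2_inner_scale_left c_def)
  also have "\<dots> = of_real ((norm z)\<^sup>2)"
    unfolding norm_z of_real_sum by (intro sum.cong refl) (metis complex_norm_square mult.commute)
  finally have "(norm z)\<^sup>2 = cmod \<langle>X z, y\<rangle>" by (simp only: norm_of_real abs_power2)
  also have "\<dots> \<le> norm (X z) * norm y" by (rule ell2_inner_cauchy_schwarz)
  also have "\<dots> \<le> K * norm z * norm y" using K(1)[of z] by (simp add: mult_right_mono)
  finally have "norm z * norm z \<le> norm z * (K * norm y)"
    by (simp add: power2_eq_square mult.assoc mult.left_commute)
  then have "norm z \<le> K * norm y"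
    using K(2) by (cases "norm z = 0") (auto simp: mult_le_cancel_left_pos)
  then have "(norm z)\<^sup>2 \<le> (K * norm y)\<^sup>2" by (intro power_mono) auto
  then show ?thesis using norm_z c_def by simp
qed

lemma adjoint_exists:
  assumes X: "bounded_op X"
  shows "\<exists>Y. Y \<in> BH \<and> (\<forall>x y. \<langle>X x, y\<rangle> = \<langle>x, Y y\<rangle>)"
proof -
  obtain K where K: "K > 0" "\<And>x. norm (X x) \<le> K * norm x" using bounded_op_bound[OF X] by blast
  define c where "c y i = \<langle>X (ell2_basis i), y\<rangle>" for y i
  have "(\<Sum>i\<in>F. (cmod (c y i))\<^sup>2) \<le> (K * norm y)\<^sup>2" if "finite F" for F y
    unfolding c_def using X K(2,1) that by (rule adjoint_coordinates_bound)
  then have c_summable: "square_summable (c y)"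
    and norm_c: "(\<Sum>\<^sub>\<infinity>i. (cmod (c y i))\<^sup>2) \<le> (K * norm y)\<^sup>2" for y
    by (blast intro: square_summable_finite_sums_bounded)+
  define Y where "Y y = Ell2 (c y)" for y
  have vec_Y: "ell2_vec (Y y) = c y" for y using c_summable by (simp add: Y_def)
  have "norm (Y y) \<le> K * norm y" for y
    by (rule power2_le_imp_le) (use norm_c K in \<open>simp_all add: power2_norm_ell2 vec_Y\<close>)
  then have "Y \<in> BH" unfolding BH_iff
    by (intro bounded_opI[where K = K] ell2_eqI)
      (simp_all add: vec_Y c_def ell2_inner_add_right ell2_inner_scale_right)
  moreover have "\<langle>X x, y\<rangle> = \<langle>x, Y y\<rangle>" for x y
  proof (rule tendsto_unique[OF finite_subsets_at_top_neq_bot])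
    show "((\<lambda>F. \<langle>X (ell2_restrict F x), y\<rangle>) \<longlongrightarrow> \<langle>X x, y\<rangle>) (finite_subsets_at_top UNIV)"
      by (intro tendsto_ell2_inner_left bounded_op_tendsto[OF X] ell2_restrict_tendsto)
    have "((\<lambda>i. cnj (ell2_vec x i) * c y i) has_sum \<langle>x, Y y\<rangle>) UNIV"
      unfolding ell2_inner_def vec_Y
      using square_summable_inner_summable[OF square_summable_ell2_vec c_summable] by simp
    moreover have partial_sums: "\<langle>X (ell2_restrict F x), y\<rangle> = (\<Sum>i\<in>F. cnj (ell2_vec x i) * c y i)"
      if "finite F" for F
      unfolding ell2_restrict_eq_sum_basis[OF that] bounded_op_sum[OF X] ell2_inner_sum_left
      by (simp add: bounded_op_scale[OF X] ell2_inner_scale_left c_def)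
    ultimately show "((\<lambda>F. \<langle>X (ell2_restrict F x), y\<rangle>) \<longlongrightarrow> \<langle>x, Y y\<rangle>) (finite_subsets_at_top UNIV)"
      unfolding has_sum_def
      by (elim Lim_transform_eventually) (auto simp: partial_sums intro!: eventually_finite_subsets_at_top_weakI)
  qed
  ultimately show ?thesis by blast
qed

lemma adj_is_adjoint: "bounded_op X \<Longrightarrow> adj X \<in> BH \<and> (\<forall>x y. \<langle>X x, y\<rangle> = \<langle>x, adj X y\<rangle>)"
  unfolding adj_def by (rule someI_ex[OF adjoint_exists])

lemma hermitian_iff_adj_eq: "bounded_op X \<Longrightarrow> hermitian X \<longleftrightarrow> adj X = X"
proof
  assume X: "bounded_op X" and "hermitian X"
  show "adj X = X"
  proof
    fix y
    have "\<langle>x, adj X y - X y\<rangle> = 0" for x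
      using adj_is_adjoint[OF X] \<open>hermitian X\<close> by (simp add: ell2_inner_diff_right hermitian_def)
    from this[of "adj X y - X y"] show "adj X y = X y" by (simp add: ell2_inner_self_eq_norm)
  qed
next
  assume "bounded_op X" and "adj X = X"
  then show "hermitian X" using adj_is_adjoint[of X] by (simp add: hermitian_def)
qed

lemma is_projection_iff: "is_projection P \<longleftrightarrow> bounded_op P \<and> P \<circ> P = P \<and> hermitian P"
  using hermitian_iff_adj_eq by (auto simp: is_projection_def BH_iff)

lemma op_le_projection_if_kills_complement:
  assumes X: "bounded_op X" "op_pos X" "op_le X id" and P: "is_projection P"
    and kills: "\<And>x. X (x - P x) = 0"
  shows "op_le X P"
  unfolding op_le_iff
proof
  fix x
  have P_idem: "P (P x) = P x" and P_herm: "hermitian P" using P by (auto simp: is_projection_iff comp_def fun_eq_iff)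
  have X_Px: "X x = X (P x)"
    using kills[of x] bounded_op_diff[OF X(1), of x "P x"] by simp
  have "\<langle>x - P x, X (P x)\<rangle> = \<langle>X (x - P x), P x\<rangle>"
    using op_pos_hermitian[OF X(1,2)] by (simp add: hermitian_def)
  then have "\<langle>x, X x\<rangle> = \<langle>P x, X (P x)\<rangle>"
    using kills[of x] X_Px by (simp add: ell2_inner_diff_left)
  moreover have "\<langle>P x, P x\<rangle> = \<langle>x, P x\<rangle>"
    using P_herm P_idem by (metis hermitian_def)
  moreover have "Re \<langle>P x, X (P x)\<rangle> \<le> Re \<langle>P x, P x\<rangle>" using X(3) by (simp add: op_le_iff)
  ultimately show "Im \<langle>x, X x\<rangle> = Im \<langle>x, P x\<rangle> \<and> Re \<langle>x, X x\<rangle> \<le> Re \<langle>x, P x\<rangle>"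
    using X(2) hermitian_Im_form[OF P_herm] by (simp add: op_pos_iff)
qed

section \<open>Convex real sequences\<close>

context
  fixes f :: "nat \<Rightarrow> real"
  assumes convex: "\<And>n. f n - 2 * f (Suc n) + f (Suc (Suc n)) \<ge> 0"
begin

lemma convex_seq_increment_mono: "f (Suc m) - f m \<le> f (Suc (m + k)) - f (m + k)"
proof (induction k)
  case (Suc k)
  then show ?case using convex[of "m + k"] by simp
qed simp

lemma convex_seq_bounded_decreasing:
  assumes bounded: "\<And>n. f n \<le> B"
  shows "f (Suc n) \<le> f n"
proof (rule ccontr)
  define d where "d = f (Suc n) - f n"
  assume "\<not> f (Suc n) \<le> f n"
  then have "d > 0" by (simp add: d_def)
  have grow: "f n + real k * d \<le> f (n + k)" for k
  proof (induction k)
    case (Suc k)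
    then show ?case
      using convex_seq_increment_mono[of n k] by (simp add: d_def algebra_simps)
  qed simp
  obtain k :: nat where "real k > (B - f n) / d" using reals_Archimedean2 by blast
  then have "real k * d > B - f n" using \<open>d > 0\<close> by (simp add: field_simps)
  then show False using grow[of k] bounded[of "n + k"] by simp
qed

lemma convex_seq_drop_le: "f 0 - f n \<le> real n * (f 0 - f 1)"
proof (induction n)
  case (Suc n)
  have "f n - f (Suc n) \<le> f 0 - f 1" using convex_seq_increment_mono[of 0 n] by simp
  with Suc show ?case by (simp add: algebra_simps)
qed simp

end

section \<open>Powers of a positive contraction\<close>

lemma bounded_op_comp:
  assumes X: "bounded_op X" and Y: "bounded_op Y"
  shows "bounded_op (X \<circ> Y)"
proof -
  obtain K L where K: "K > 0" "\<And>x. norm (X x) \<le> K * norm x" and L: "\<And>x. norm (Y x) \<le> L * norm x"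
    using bounded_op_bound[OF X] bounded_op_bound[OF Y] by blast
  have "norm (X (Y x)) \<le> (K * L) * norm x" for x
    using order_trans[OF K(2)[of "Y x"] mult_left_mono[OF L[of x] less_imp_le[OF K(1)]]]
    by (simp add: mult.assoc)
  then show ?thesis
    by (intro bounded_opI[where K = "K * L"])
      (simp_all add: bounded_op_add[OF X] bounded_op_add[OF Y] bounded_op_scale[OF X] bounded_op_scale[OF Y])
qed

lemma bounded_op_funpow: "bounded_op X \<Longrightarrow> bounded_op (X ^^ n)"
  by (induction n) (simp_all add: bounded_op_id bounded_op_comp)

locale positive_contraction =
  fixes b :: "'i op"
  assumes bounded: "bounded_op b" and positive: "op_pos b"
    and contraction: "\<And>x. norm (b x) \<le> norm x"
begin

lemma hermitian: "hermitian b"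
  using op_pos_hermitian[OF bounded positive] .

lemma bounded_pow: "bounded_op (b ^^ n)"
  by (rule bounded_op_funpow[OF bounded])

lemma hermitian_pow: "hermitian (b ^^ n)"
proof (induction n)
  case (Suc n)
  have "\<langle>x, (b ^^ Suc n) y\<rangle> = \<langle>(b ^^ Suc n) x, y\<rangle>" for x y
  proof -
    have "\<langle>x, (b ^^ Suc n) y\<rangle> = \<langle>b x, (b ^^ n) y\<rangle>" using hermitian by (simp add: hermitian_def)
    also have "\<dots> = \<langle>(b ^^ n) (b x), y\<rangle>" using Suc by (simp add: hermitian_def)
    finally show ?thesis by (simp add: funpow_Suc_right del: funpow.simps)
  qed
  then show ?case unfolding hermitian_def by blast
qed (simp add: hermitian_def)

lemma norm_pow_le: "norm ((b ^^ n) x) \<le> norm x"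
  by (induction n) (auto intro: order_trans[OF contraction])

lemma inner_pow_pow: "\<langle>(b ^^ m) x, (b ^^ n) y\<rangle> = \<langle>x, (b ^^ (m + n)) y\<rangle>"
  using hermitian_pow[of m] by (simp add: hermitian_def funpow_add)

text \<open>Even powers are squares \<open>(b\<^sup>m)\<^sup>2\<close> and odd ones are \<open>b\<^sup>m b b\<^sup>m\<close>.\<close>

lemma positive_pow: "op_pos (b ^^ n)"
  unfolding op_pos_iff
proof
  fix x
  have "\<exists>m. n = m + m \<or> n = m + Suc m" by presburger
  then obtain m where "n = m + m \<or> n = m + Suc m" by blast
  then show "Im \<langle>x, (b ^^ n) x\<rangle> = 0 \<and> 0 \<le> Re \<langle>x, (b ^^ n) x\<rangle>"
  proof
    assume "n = m + m"
    then have "\<langle>x, (b ^^ n) x\<rangle> = \<langle>(b ^^ m) x, (b ^^ m) x\<rangle>" by (simp add: inner_pow_pow)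
    then show ?thesis by simp
  next
    assume "n = m + Suc m"
    then have "\<langle>x, (b ^^ n) x\<rangle> = \<langle>(b ^^ m) x, (b ^^ Suc m) x\<rangle>"
      by (simp only: inner_pow_pow)
    then show ?thesis using positive by (simp add: op_pos_iff)
  qed
qed

definition pow_form :: "nat \<Rightarrow> 'i ell2 \<Rightarrow> real" where
  "pow_form n x = Re \<langle>x, (b ^^ n) x\<rangle>"

lemma pow_form_nonneg: "0 \<le> pow_form n x"
  using positive_pow by (simp add: pow_form_def op_pos_iff)

lemma pow_form_le: "pow_form n x \<le> (norm x)\<^sup>2"
proof -
  have "pow_form n x \<le> cmod \<langle>x, (b ^^ n) x\<rangle>" unfolding pow_form_def by (rule complex_Re_le_cmod)
  also have "\<dots> \<le> norm x * norm ((b ^^ n) x)" by (rule ell2_inner_cauchy_schwarz)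
  also have "\<dots> \<le> norm x * norm x" by (intro mult_left_mono norm_pow_le) auto
  finally show ?thesis by (simp add: power2_eq_square)
qed

lemma pow_form_convex: "pow_form n x - 2 * pow_form (Suc n) x + pow_form (Suc (Suc n)) x \<ge> 0"
proof -
  have "pow_form n (x - b x) = pow_form n x - 2 * pow_form (Suc n) x + pow_form (Suc (Suc n)) x"
    using inner_pow_pow[of 1 x n x] inner_pow_pow[of 1 x "Suc n" x]
    by (simp add: pow_form_def bounded_op_diff[OF bounded_pow] ell2_inner_diff_left
        ell2_inner_diff_right funpow_Suc_right del: funpow.simps)
  then show ?thesis using pow_form_nonneg[of n "x - b x"] by simp
qed

lemma pow_form_antimono: "m \<le> n \<Longrightarrow> pow_form n x \<le> pow_form m x"
  using convex_seq_bounded_decreasing[of "\<lambda>n. pow_form n x", OF pow_form_convex pow_form_le]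
  by (auto intro: decseq_SucI[THEN decseqD])

lemma Cauchy_pow: "Cauchy (\<lambda>n. (b ^^ n) x)"
proof (rule CauchyI)
  fix e :: real assume "0 < e"
  have "decseq (\<lambda>n. pow_form n x)" by (simp add: decseq_def pow_form_antimono)
  then obtain L where "(\<lambda>n. pow_form n x) \<longlonglongrightarrow> L"
    using decseq_convergent[of "\<lambda>n. pow_form n x" 0] pow_form_nonneg by blast
  then obtain N where N: "\<And>n. n \<ge> N \<Longrightarrow> \<bar>pow_form n x - L\<bar> < e\<^sup>2/4"
    using LIMSEQ_D[of _ L "e\<^sup>2/4"] \<open>0 < e\<close> by auto
  have "norm ((b ^^ m) x - (b ^^ n) x) < e" if "m \<ge> N" "n \<ge> N" for m n
  proof -
    have "(norm ((b ^^ m) x - (b ^^ n) x))\<^sup>2 =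
        pow_form (m + m) x - pow_form (m + n) x - pow_form (n + m) x + pow_form (n + n) x"
      by (simp flip: Re_ell2_inner_self
          add: ell2_inner_diff_left ell2_inner_diff_right inner_pow_pow pow_form_def)
    also have "\<dots> < e\<^sup>2"
    proof -
      have "N \<le> m + m" "N \<le> m + n" "N \<le> n + n" using that by simp_all
      from N[OF this(1)] N[OF this(2)] N[OF this(3)] show ?thesis
        unfolding add.commute[of n m] abs_less_iff by linarith
    qed
    finally show ?thesis by (rule power_less_imp_less_base) (use \<open>0 < e\<close> in simp)
  qed
  then show "\<exists>N. \<forall>m\<ge>N. \<forall>n\<ge>N. norm ((b ^^ m) x - (b ^^ n) x) < e" by blast
qed

text \<open>The strong limit of the powers: the orthogonal projection onto the fixed vectors of \<open>b\<close>.\<close>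

definition fix_proj :: "'i op" where
  "fix_proj x = lim (\<lambda>n. (b ^^ n) x)"

lemma pow_tendsto_fix_proj: "(\<lambda>n. (b ^^ n) x) \<longlonglongrightarrow> fix_proj x"
  unfolding fix_proj_def using Cauchy_pow Cauchy_convergent_iff convergent_LIMSEQ_iff by blast

lemma fix_proj_unique: "(\<lambda>n. (b ^^ n) x) \<longlonglongrightarrow> y \<Longrightarrow> fix_proj x = y"
  using pow_tendsto_fix_proj LIMSEQ_unique by blast

lemma bounded_fix_proj: "bounded_op fix_proj"
proof (rule bounded_opI[where K = 1])
  fix x y c
  show "fix_proj (x + y) = fix_proj x + fix_proj y"
    by (rule fix_proj_unique)
      (simp add: bounded_op_add[OF bounded_pow] tendsto_add pow_tendsto_fix_proj)
  show "fix_proj (c *\<^sub>C x) = c *\<^sub>C fix_proj x"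
    by (rule fix_proj_unique)
      (simp add: bounded_op_scale[OF bounded_pow] pow_tendsto_fix_proj
        bounded_linear.tendsto[OF bounded_linear_ell2_scale])
  have "(\<lambda>n. norm ((b ^^ n) x)) \<longlonglongrightarrow> norm (fix_proj x)" by (intro tendsto_norm pow_tendsto_fix_proj)
  then show "norm (fix_proj x) \<le> 1 * norm x" by (simp add: LIMSEQ_le_const2 norm_pow_le)
qed

lemma hermitian_fix_proj: "hermitian fix_proj"
  unfolding hermitian_def
proof (intro allI)
  fix x y
  have "(\<lambda>n. \<langle>x, (b ^^ n) y\<rangle>) \<longlonglongrightarrow> \<langle>x, fix_proj y\<rangle>"
    by (intro tendsto_ell2_inner_right pow_tendsto_fix_proj)
  moreover have "(\<lambda>n. \<langle>x, (b ^^ n) y\<rangle>) \<longlonglongrightarrow> \<langle>fix_proj x, y\<rangle>"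
    using hermitian_pow tendsto_ell2_inner_left[OF pow_tendsto_fix_proj, of x y]
    by (simp add: hermitian_def)
  ultimately show "\<langle>x, fix_proj y\<rangle> = \<langle>fix_proj x, y\<rangle>" by (rule LIMSEQ_unique)
qed

lemma pow_fixed: "b v = v \<Longrightarrow> (b ^^ n) v = v"
  by (induction n) auto

lemma fix_proj_fixed: "b (fix_proj x) = fix_proj x"
proof -
  have "(\<lambda>n. b ((b ^^ n) x)) \<longlonglongrightarrow> b (fix_proj x)"
    by (intro bounded_op_tendsto[OF bounded] pow_tendsto_fix_proj)
  moreover have "(\<lambda>n. b ((b ^^ n) x)) \<longlonglongrightarrow> fix_proj x"
    using LIMSEQ_Suc[OF pow_tendsto_fix_proj[of x]] by simp
  ultimately show ?thesis by (rule LIMSEQ_unique)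
qed

lemma fix_proj_idem: "fix_proj (fix_proj x) = fix_proj x"
  by (rule fix_proj_unique) (simp add: pow_fixed[OF fix_proj_fixed])

lemma fix_proj_commute:
  assumes Y: "bounded_op Y" and commute: "\<And>z. Y (b z) = b (Y z)"
  shows "Y (fix_proj x) = fix_proj (Y x)"
proof -
  have "Y ((b ^^ n) x) = (b ^^ n) (Y x)" for n
    by (induction n) (simp_all add: commute)
  then have "(\<lambda>n. (b ^^ n) (Y x)) \<longlonglongrightarrow> Y (fix_proj x)"
    using bounded_op_tendsto[OF Y pow_tendsto_fix_proj, of x] by simp
  then show ?thesis by (rule fix_proj_unique[symmetric])
qed

lemma form_one_minus_pow: "Re \<langle>x, x - (b ^^ n) x\<rangle> = (norm x)\<^sup>2 - pow_form n x"
  by (simp add: pow_form_def ell2_inner_diff_right)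

lemma form_one_minus_pow_le: "Re \<langle>x, x - (b ^^ n) x\<rangle> \<le> real n * Re \<langle>x, x - b x\<rangle>"
proof -
  have "pow_form 0 x = (norm x)\<^sup>2" by (simp add: pow_form_def)
  moreover have "Re \<langle>x, x - b x\<rangle> = (norm x)\<^sup>2 - pow_form 1 x" using form_one_minus_pow[of x 1] by simp
  ultimately show ?thesis
    using convex_seq_drop_le[of "\<lambda>n. pow_form n x", OF pow_form_convex, of n] form_one_minus_pow[of x n]
    by simp
qed

end

context
  fixes A :: "'i op set"
  assumes vna: "von_neumann_algebra A"
begin

lemma vna_bounded: "X \<in> A \<Longrightarrow> bounded_op X"
  using vna by (auto simp: von_neumann_algebra_def BH_iff)

lemma vna_id: "id \<in> A"
  using vna by (simp add: von_neumann_algebra_def)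

lemma vna_comp: "X \<in> A \<Longrightarrow> Y \<in> A \<Longrightarrow> X \<circ> Y \<in> A"
  using vna by (simp add: von_neumann_algebra_def)

lemma vna_scale: "X \<in> A \<Longrightarrow> op_scale c X \<in> A"
  using vna by (simp add: von_neumann_algebra_def)

lemma vna_minus: "X \<in> A \<Longrightarrow> Y \<in> A \<Longrightarrow> op_minus X Y \<in> A"
  using vna unfolding op_minus_def von_neumann_algebra_def by blast

lemma vna_funpow: "X \<in> A \<Longrightarrow> X ^^ n \<in> A"
  by (induction n) (simp_all add: vna_id vna_comp)

lemma vna_mem_if_commutes_with_commutant:
  assumes "a \<in> A" and E: "bounded_op E"
    and commute: "\<And>Y. bounded_op Y \<Longrightarrow> Y \<circ> a = a \<circ> Y \<Longrightarrow> Y \<circ> E = E \<circ> Y"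
  shows "E \<in> A"
proof -
  have "E \<in> commutant (commutant A)"
    using assms by (auto simp: commutant_def BH_iff)
  then show ?thesis using vna by (simp add: von_neumann_algebra_def)
qed

end

section \<open>The support of a positive element\<close>

locale positive_in_vna =
  fixes A :: "'i op set" and a :: "'i op" and K :: real
  assumes vna: "von_neumann_algebra A" and in_A: "a \<in> A" and positive: "op_pos a"
    and K: "K > 0" "\<And>x. norm (a x) \<le> K * norm x"
begin

definition b :: "'i op" where
  "b = op_minus id (op_scale (of_real (1/K)) a)"

lemma bounded: "bounded_op a"
  using vna_bounded[OF vna in_A] .

lemma b_apply: "b x = x - (1/K) *\<^sub>R a x"
  unfolding b_def op_minus_apply op_scale_apply ell2_scale_of_real by simp

lemma b_in_A: "b \<in> A"
  unfolding b_def by (intro vna_minus[OF vna] vna_id[OF vna] vna_scale[OF vna] in_A)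

sublocale b: positive_contraction b
proof
  show "bounded_op b" using vna_bounded[OF vna b_in_A] .
  have "(1/K) * Re \<langle>x, a x\<rangle> \<le> (norm x)\<^sup>2" for x
    using Re_form_le_bound[OF bounded K(2), of x] K(1) by (simp add: field_simps)
  then show "op_pos b"
    using positive by (simp add: op_pos_iff b_apply ell2_inner_diff_right ell2_inner_scaleR_right)
  fix x
  define r where "r = 1/K"
  have "\<langle>b x, b x\<rangle> = \<langle>x, x\<rangle> - of_real r * \<langle>x, a x\<rangle> - of_real r * \<langle>a x, x\<rangle>
      + of_real r * of_real r * \<langle>a x, a x\<rangle>"
    by (simp add: b_apply r_def ell2_inner_diff_left ell2_inner_diff_right ell2_inner_scaleR_left
        ell2_inner_scaleR_right algebra_simps)
  then have "(norm (b x))\<^sup>2 = (norm x)\<^sup>2 - 2 * r * Re \<langle>x, a x\<rangle> + r * r * (norm (a x))\<^sup>2"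
    using ell2_inner_commute[of x "a x"] by (simp flip: Re_ell2_inner_self)
  also have "\<dots> = (norm x)\<^sup>2 - 2 / K * Re \<langle>x, a x\<rangle> + (norm (a x))\<^sup>2 / K\<^sup>2"
    by (simp add: r_def power2_eq_square)
  also have "\<dots> \<le> (norm x)\<^sup>2 - 1 / K * Re \<langle>x, a x\<rangle>"
    using op_pos_power2_norm_le[OF bounded positive K(2,1), of x] K(1) by (simp add: field_simps power2_eq_square)
  also have "\<dots> \<le> (norm x)\<^sup>2"
    using positive K(1) by (simp add: op_pos_iff)
  finally show "norm (b x) \<le> norm x" by (rule power2_le_imp_le) simp
qed

lemma a_fix_proj: "a (b.fix_proj x) = 0"
  using b.fix_proj_fixed[of x] K(1) by (simp add: b_apply)

lemma fix_proj_a: "b.fix_proj (a x) = 0"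
  using b.fix_proj_commute[OF bounded, of x] a_fix_proj
  by (simp add: b_apply bounded_op_diff[OF bounded] bounded_op_scaleR[OF bounded])

lemma fix_proj_in_A: "b.fix_proj \<in> A"
proof (rule vna_mem_if_commutes_with_commutant[OF vna in_A b.bounded_fix_proj])
  fix Y assume Y: "bounded_op Y" and "Y \<circ> a = a \<circ> Y"
  then have "Y (b z) = b (Y z)" for z
    by (metis b_apply bounded_op_diff bounded_op_scaleR comp_apply)
  then show "Y \<circ> b.fix_proj = b.fix_proj \<circ> Y"
    using b.fix_proj_commute[OF Y] by auto
qed

lemma kernel_complement_is_support_candidate:
  defines "q \<equiv> op_minus id b.fix_proj"
  shows "q \<in> A" and "is_projection q" and "a = q \<circ> a \<circ> q"
proof -
  show "q \<in> A" unfolding q_def by (intro vna_minus[OF vna] vna_id[OF vna] fix_proj_in_A)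
  then have "bounded_op q" by (rule vna_bounded[OF vna])
  moreover have "q \<circ> q = q"
    by (rule ext) (simp add: q_def bounded_op_diff[OF b.bounded_fix_proj] b.fix_proj_idem)
  moreover have "hermitian q"
    using b.hermitian_fix_proj by (simp add: q_def hermitian_def ell2_inner_diff_left ell2_inner_diff_right)
  ultimately show "is_projection q" by (simp add: is_projection_iff)
  show "a = q \<circ> a \<circ> q"
    by (rule ext) (simp add: q_def bounded_op_diff[OF bounded] a_fix_proj fix_proj_a)
qed

end

locale support_of_positive = positive_in_vna A a K for A :: "'i op set" and a K +
  fixes p :: "'i op"
  assumes support: "is_support A a p"
begin

lemma support_projection: "is_projection p"
  using support by (simp add: is_support_def)

lemma support_bounded: "bounded_op p" and support_hermitian: "hermitian p"
  and support_idem: "p (p x) = p x"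
  using support_projection by (auto simp: is_projection_iff comp_def fun_eq_iff)

lemma support_orthogonal: "\<langle>x - p x, p y\<rangle> = 0"
proof -
  have "\<langle>p x, p y\<rangle> = \<langle>x, p (p y)\<rangle>" using support_hermitian by (simp add: hermitian_def)
  then show ?thesis by (simp add: ell2_inner_diff_left support_idem)
qed

lemma a_off_support: "a (x - p x) = 0"
proof -
  have "a = p \<circ> a \<circ> p" using support by (simp add: is_support_def)
  then have "a (x - p x) = p (a (p x - p (p x)))" by (metis comp_apply bounded_op_diff[OF support_bounded])
  then show ?thesis by (simp add: support_idem bounded_op_zero[OF bounded] bounded_op_zero[OF support_bounded])
qed

lemma fix_proj_support: "b.fix_proj (p x) = 0"
proof -
  have p_le: "op_le p (op_minus id b.fix_proj)"
    using support kernel_complement_is_support_candidate by (simp add: is_support_def)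
  have p_fix_proj: "p (b.fix_proj v) = 0" for v
  proof -
    define w where "w = b.fix_proj v"
    have "Re \<langle>w, p w\<rangle> \<le> Re \<langle>w, w - b.fix_proj w\<rangle>" using p_le by (simp add: op_le_iff)
    also have "\<dots> = 0" by (simp add: w_def b.fix_proj_idem)
    also have "\<langle>w, p w\<rangle> = \<langle>p w, p w\<rangle>" using support_hermitian support_idem by (metis hermitian_def)
    finally show ?thesis by (simp add: w_def)
  qed
  define z where "z = b.fix_proj (p x)"
  have "\<langle>z, z\<rangle> = \<langle>p (b.fix_proj z), x\<rangle>"
    using b.hermitian_fix_proj support_hermitian by (simp add: z_def hermitian_def)
  then show ?thesis by (simp add: p_fix_proj ell2_inner_self_eq_norm flip: z_def)
qed

definition approx :: "nat \<Rightarrow> 'i op" where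
  "approx n = op_minus id (b ^^ n)"

lemma approx_in_A: "approx n \<in> A"
  unfolding approx_def by (intro vna_minus[OF vna] vna_id[OF vna] vna_funpow[OF vna] b_in_A)

lemma approx_form: "\<langle>x, approx n x\<rangle> = of_real ((norm x)\<^sup>2 - b.pow_form n x)"
  using b.positive_pow[of n]
  by (simp add: approx_def b.pow_form_def ell2_inner_diff_right ell2_inner_self_eq_norm op_pos_iff
      complex_eq_iff)

text \<open>The powers of \<open>b\<close> fix the complement of the support, so only the component in the
  support contributes to the form of \<open>approx n\<close>.\<close>

lemma approx_form_support: "(norm x)\<^sup>2 - b.pow_form n x = Re \<langle>x, p x\<rangle> - b.pow_form n (p x)"
proof -
  define v where "v = x - p x"
  have "b v = v" by (simp add: b_apply v_def a_off_support)
  then have pow_v: "(b ^^ n) v = v" by (rule b.pow_fixed)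
  have "(b ^^ n) x = (b ^^ n) (p x) + (b ^^ n) v"
    by (simp add: v_def flip: bounded_op_add[OF b.bounded_pow])
  then have "\<langle>x, approx n x\<rangle> = \<langle>p x + v, p x - (b ^^ n) (p x)\<rangle>"
    by (simp add: approx_def pow_v) (simp add: v_def)
  also have "\<dots> = \<langle>p x, p x\<rangle> - \<langle>p x, (b ^^ n) (p x)\<rangle> + (\<langle>v, p x\<rangle> - \<langle>(b ^^ n) v, p x\<rangle>)"
    using b.hermitian_pow[of n, unfolded hermitian_def, rule_format, of v "p x"]
    by (simp add: ell2_inner_add_left ell2_inner_diff_right)
  also have "\<langle>v, p x\<rangle> - \<langle>(b ^^ n) v, p x\<rangle> = 0" by (simp add: pow_v)
  also have "\<langle>p x, p x\<rangle> = \<langle>x, p x\<rangle>"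
    using support_orthogonal[of x x] by (simp add: ell2_inner_diff_left)
  finally have "Re \<langle>x, approx n x\<rangle> = Re \<langle>x, p x\<rangle> - Re \<langle>p x, (b ^^ n) (p x)\<rangle>" by simp
  then show ?thesis by (simp only: approx_form Re_complex_of_real b.pow_form_def)
qed

lemma approx_le_iff: "op_le (approx n) Y \<longleftrightarrow>
    (\<forall>x. Im \<langle>x, Y x\<rangle> = 0 \<and> (norm x)\<^sup>2 - b.pow_form n x \<le> Re \<langle>x, Y x\<rangle>)"
  unfolding op_le_iff approx_form by auto

lemma approx_positive: "op_pos (approx n)"
  by (simp add: op_pos_iff approx_form b.pow_form_le)

lemma approx_mono: "m \<le> n \<Longrightarrow> op_le (approx m) (approx n)"
  by (simp add: approx_le_iff approx_form b.pow_form_antimono)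

lemma approx_le_id: "op_le (approx n) id"
  by (simp add: approx_le_iff b.pow_form_nonneg)

lemma approx_le_scaled: "op_le (approx n) (op_scale (of_real (real n / K)) a)"
proof -
  have "(norm x)\<^sup>2 - b.pow_form n x \<le> real n / K * Re \<langle>x, a x\<rangle>" for x
    using b.form_one_minus_pow_le[of x n]
    by (simp add: b.form_one_minus_pow b_apply ell2_inner_diff_right ell2_inner_scaleR_right
        b.pow_form_def)
  then show ?thesis
    using positive by (simp add: approx_le_iff ell2_inner_scale_right op_pos_iff)
qed

lemma approx_le_support: "op_le (approx n) p"
  using approx_form_support b.pow_form_nonneg hermitian_Im_form[OF support_hermitian]
  by (simp add: approx_le_iff)

lemma support_le_if_approx_le:
  assumes "\<And>n. op_le (approx n) Y"
  shows "op_le p Y"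
  unfolding op_le_iff
proof
  fix x
  have "(\<lambda>n. b.pow_form n (p x)) \<longlonglongrightarrow> Re \<langle>p x, b.fix_proj (p x)\<rangle>"
    unfolding b.pow_form_def by (intro tendsto_Re tendsto_ell2_inner_right b.pow_tendsto_fix_proj)
  then have lim: "(\<lambda>n. Re \<langle>x, p x\<rangle> - b.pow_form n (p x)) \<longlonglongrightarrow> Re \<langle>x, p x\<rangle>"
    using tendsto_diff[OF tendsto_const] by (fastforce simp: fix_proj_support)
  have "Re \<langle>x, p x\<rangle> - b.pow_form n (p x) \<le> Re \<langle>x, Y x\<rangle>" for n
    using assms[of n] unfolding approx_le_iff approx_form_support by blast
  then have "Re \<langle>x, p x\<rangle> \<le> Re \<langle>x, Y x\<rangle>" by (intro LIMSEQ_le_const2[OF lim]) simp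
  moreover have "Im \<langle>x, Y x\<rangle> = 0" using assms[of 0] by (simp add: approx_le_iff)
  ultimately show "Im \<langle>x, p x\<rangle> = Im \<langle>x, Y x\<rangle> \<and> Re \<langle>x, p x\<rangle> \<le> Re \<langle>x, Y x\<rangle>"
    using hermitian_Im_form[OF support_hermitian] by simp
qed

lemma support_is_lub: "op_is_lub (range approx) p"
  using support_bounded approx_le_support support_le_if_approx_le
  by (auto simp: op_is_lub_def BH_iff)

lemma approx_directed: "\<forall>X\<in>range approx. \<forall>Y\<in>range approx. \<exists>Z\<in>range approx. op_le X Z \<and> op_le Y Z"
proof (intro ballI)
  fix X Y assume "X \<in> range approx" "Y \<in> range approx"
  then obtain m n where "X = approx m" "Y = approx n" by blast
  then show "\<exists>Z\<in>range approx. op_le X Z \<and> op_le Y Z"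
    using approx_mono[of m "max m n"] approx_mono[of n "max m n"] by auto
qed

end

lemma matrix_pos_1_iff:
  fixes M :: "nat \<Rightarrow> nat \<Rightarrow> 'i op"
  shows "matrix_pos 1 M \<longleftrightarrow> op_pos (M 0 0)"
proof -
  have "(\<Sum>i<1. \<Sum>j<1. \<langle>\<xi> i, M i j (\<xi> j)\<rangle>) = \<langle>\<xi> 0, M 0 0 (\<xi> 0)\<rangle>" for \<xi>
    by (simp add: lessThan_Suc)
  moreover have "(\<forall>\<xi> :: nat \<Rightarrow> 'i ell2. cnonneg \<langle>\<xi> 0, M 0 0 (\<xi> 0)\<rangle>) \<longleftrightarrow> (\<forall>x. cnonneg \<langle>x, M 0 0 x\<rangle>)"
  proof
    assume "\<forall>\<xi> :: nat \<Rightarrow> 'i ell2. cnonneg \<langle>\<xi> 0, M 0 0 (\<xi> 0)\<rangle>"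
    then show "\<forall>x. cnonneg \<langle>x, M 0 0 x\<rangle>" by (auto dest: spec[of _ "\<lambda>_. _"])
  qed auto
  ultimately show ?thesis unfolding matrix_pos_def op_pos_def by simp
qed

context
  fixes A :: "'i op set" and T :: "'i op \<Rightarrow> 'i op"
  assumes vna: "von_neumann_algebra A" and markov: "markov_operator A T"
begin

lemma markov_in_A: "X \<in> A \<Longrightarrow> T X \<in> A"
  using markov by (simp add: markov_operator_def)

lemma markov_id: "T id = id"
  using markov by (simp add: markov_operator_def)

lemma markov_scale: "X \<in> A \<Longrightarrow> T (op_scale c X) = op_scale c (T X)"
  using markov by (simp add: markov_operator_def)

lemma markov_minus:
  assumes "X \<in> A" "Y \<in> A"
  shows "T (op_minus X Y) = op_minus (T X) (T Y)"
proof -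
  have "T (op_add X (op_scale (-1) Y)) = op_add (T X) (T (op_scale (-1) Y))"
    using markov assms vna_scale[OF vna] by (simp add: markov_operator_def)
  then show ?thesis using markov_scale[OF assms(2)] by (simp add: op_minus_def)
qed

lemma markov_positive:
  assumes "X \<in> A" "op_pos X"
  shows "op_pos (T X)"
proof -
  have "matrix_pos 1 (\<lambda>_ _. X)" using assms(2) by (simp only: matrix_pos_1_iff)
  moreover have "completely_positive A T" using markov by (simp add: markov_operator_def)
  ultimately have "matrix_pos 1 (\<lambda>_ _. T X)"
    using assms(1) unfolding completely_positive_def
    by (elim allE[of _ 1] allE[of _ "\<lambda>_ _. X"]) simp
  then show ?thesis by (simp only: matrix_pos_1_iff)
qed

lemma markov_mono: "X \<in> A \<Longrightarrow> Y \<in> A \<Longrightarrow> op_le X Y \<Longrightarrow> op_le (T X) (T Y)"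
  using markov_positive[of "op_minus Y X"] by (simp add: op_le_def markov_minus vna_minus[OF vna])

lemma markov_lub_le:
  assumes "D \<subseteq> A" "D \<noteq> {}" "\<forall>X\<in>D. op_pos X"
    and "\<forall>X\<in>D. \<forall>Y\<in>D. \<exists>Z\<in>D. op_le X Z \<and> op_le Y Z" and "\<exists>B\<in>BH. \<forall>X\<in>D. op_le X B"
    and "op_is_lub D s" and "\<forall>X\<in>D. op_le (T X) C" and "C \<in> BH"
  shows "op_le (T s) C"
proof -
  have "normal_map A T" using markov by (simp add: markov_operator_def)
  then have "op_is_lub (T ` D) (T s)"
    unfolding normal_map_def by (rule allE[of _ D], elim impE allE[of _ s]) (use assms in simp_all)
  then show ?thesis using assms(7,8) by (simp add: op_is_lub_def)
qed

end

context support_of_positive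
begin

lemma markov_approx_le_support:
  assumes markov: "markov_operator A T" and "op_le (T a) a"
  shows "op_le (T (approx n)) p"
proof -
  define c where "c = real n / K"
  define t where "t = T (approx n)"
  have t: "bounded_op t" "op_pos t"
    unfolding t_def using markov_in_A[OF vna markov approx_in_A] vna_bounded[OF vna]
      markov_positive[OF vna markov approx_in_A approx_positive] by blast+
  have "op_le t id"
    using markov_mono[OF vna markov approx_in_A vna_id[OF vna] approx_le_id] markov_id[OF vna markov]
    by (simp add: t_def)
  have "op_le t (T (op_scale (of_real c) a))"
    unfolding t_def c_def by (intro markov_mono[OF vna markov] approx_in_A vna_scale[OF vna] in_A approx_le_scaled)
  then have "op_le t (op_scale (of_real c) (T a))"
    by (simp only: markov_scale[OF vna markov in_A])
  moreover have "op_le (op_scale (of_real c) (T a)) (op_scale (of_real c) a)"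
    using K(1) by (intro op_le_scale \<open>op_le (T a) a\<close>) (simp add: c_def)
  ultimately have "op_le t (op_scale (of_real c) a)" by (rule op_le_trans)
  then have kills: "t (x - p x) = 0" for x
    by (rule op_pos_le_apply_eq_0[OF t]) (simp add: a_off_support ell2_scale_of_real)
  show ?thesis
    unfolding t_def[symmetric] using t \<open>op_le t id\<close> support_projection kills
    by (rule op_le_projection_if_kills_complement)
qed

end

theorem proposition3p9:
  fixes A :: "'i op set" and T :: "'i op \<Rightarrow> 'i op" and a p :: "'i op"
  assumes "von_neumann_algebra A"
    and "markov_operator A T"
    and "a \<in> A" and "op_pos a"
    and "op_le (T a) a"
    and "is_support A a p"
  shows "op_le (T p) p"
proof -
  obtain K where "K > 0" "\<And>x. norm (a x) \<le> K * norm x"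
    using bounded_op_bound vna_bounded[OF assms(1,3)] by blast
  then interpret support_of_positive A a K p
    using assms by unfold_locales auto
  have "op_le (T (approx n)) p" for n
    using assms(2,5) by (rule markov_approx_le_support)
  moreover have "id \<in> BH" "p \<in> BH"
    using bounded_op_id support_bounded by (simp_all add: BH_iff)
  ultimately show ?thesis
    using approx_in_A approx_positive approx_directed approx_le_id support_is_lub
    by (intro markov_lub_le[OF assms(1,2), of "range approx"]) auto
qed

end
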